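(* Let $n\ge 1$, and let $E_1,\dots,E_n\in\mathbb{R}$ be the energy scores of a minibatch $B=\{x_i\}_{i=1}^n$. Define \[ \mu_B=\frac{1}{n}\sum_{j=1}^{n}E_j,\qquad s_B=\sqrt{\frac{1}{n}\sum_{j=1}^{n}(E_j-\mu_B)^2}, \] and, for constants $\epsilon_B>0$ and $\beta>0$, \[ \widetilde{E}_i=\frac{E_i-\mu_B}{s_B+\epsilon_B},\qquad w_i=\rho(-\beta\widetilde{E}_i),\qquad \rho(t)=\frac{1}{1+\exp(-t)}. \] If $n=1$, then $w_1=1/2$. If $n\ge 2$, then for every $i\in\{1,\dots,n\}$, \[ \rho\!\left(-\beta\sqrt{n-1}\right)\le w_i\le \rho\!\left(\beta\sqrt{n-1}\right). \] In particular, $0<w_i<1$ for all $i$.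
   Context: The $E_i$ are arbitrary real numbers (in the application, $E_i=E(x_i)$ is a disagreement score between a private and a proxy model on sample $x_i$); $w_i$ is called the trust weight of sample $x_i$. *)

theory Defs
  imports Complex_Main
begin

definition sigmoid :: "real \<Rightarrow> real" where
  "sigmoid t = 1 / (1 + exp (- t))"

definition batch_mean :: "nat \<Rightarrow> (nat \<Rightarrow> real) \<Rightarrow> real" where
  "batch_mean n E = (1 / real n) * (\<Sum>j=1..n. E j)"

definition batch_std :: "nat \<Rightarrow> (nat \<Rightarrow> real) \<Rightarrow> real" where
  "batch_std n E = sqrt ((1 / real n) * (\<Sum>j=1..n. (E j - batch_mean n E)^2))"

definition normalized_energy :: "nat \<Rightarrow> (nat \<Rightarrow> real) \<Rightarrow> real \<Rightarrow> nat \<Rightarrow> real" where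
  "normalized_energy n E eps i = (E i - batch_mean n E) / (batch_std n E + eps)"

definition trust_weight :: "nat \<Rightarrow> (nat \<Rightarrow> real) \<Rightarrow> real \<Rightarrow> real \<Rightarrow> nat \<Rightarrow> real" where
  "trust_weight n E eps \<beta> i = sigmoid (- \<beta> * normalized_energy n E eps i)"

end

theory Submission
  imports Defs "HOL-Analysis.Convex"
begin

text \<open>Samuelson's inequality: no point of a sample lies more than \<open>sqrt (n - 1)\<close> population
  standard deviations from the mean. Hence the normalised energies lie in
  \<open>[-sqrt (n - 1), sqrt (n - 1)]\<close>, even after adding \<open>eps > 0\<close> to the denominator, and the
  bounds on the trust weights follow from the monotonicity of the sigmoid. For \<open>n = 1\<close> the
  interval degenerates to \<open>{0}\<close> and the weight is \<open>sigmoid 0 = 1/2\<close>.\<close>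

lemma sigmoid_mono: "a \<le> b \<Longrightarrow> sigmoid a \<le> sigmoid b"
  unfolding sigmoid_def by (simp add: frac_le add_pos_pos)

lemma sigmoid_pos: "0 < sigmoid t"
  unfolding sigmoid_def by (simp add: add_pos_pos)

lemma sigmoid_less_1: "sigmoid t < 1"
  unfolding sigmoid_def by (simp add: add_pos_pos)

lemma sigmoid_0: "sigmoid 0 = 1 / 2"
  unfolding sigmoid_def by simp

lemma sigmoid_abs_le_bounds:
  assumes "\<bar>t\<bar> \<le> c"
  shows "sigmoid (- c) \<le> sigmoid t \<and> sigmoid t \<le> sigmoid c"
  using assms by (auto intro: sigmoid_mono)

text \<open>The \<open>card I - 1\<close> deviations other than \<open>d i\<close> sum to \<open>- d i\<close>; Cauchy--Schwarz on them
  gives \<open>(d i)\<^sup>2 \<le> (card I - 1) * (\<Sum>j\<in>I. (d j)\<^sup>2 - (d i)\<^sup>2)\<close>.\<close>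

lemma centered_sq_le_sum_sq:
  fixes d :: "'a \<Rightarrow> real"
  assumes "finite I" and "i \<in> I" and "(\<Sum>j\<in>I. d j) = 0"
  shows "card I * (d i)\<^sup>2 \<le> (real (card I) - 1) * (\<Sum>j\<in>I. (d j)\<^sup>2)"
proof -
  define A where "A = I - {i}"
  have card_I: "real (card I) = real (card A) + 1"
    using card.remove[OF assms(1,2)] by (simp add: A_def)
  have "d i + (\<Sum>j\<in>A. d j) = 0"
    using sum.remove[OF assms(1,2), of d] assms(3) by (simp add: A_def)
  then have "(d i)\<^sup>2 = (\<Sum>j\<in>A. d j)\<^sup>2"
    by (simp add: eq_neg_iff_add_eq_0[symmetric])
  also have "\<dots> \<le> (\<Sum>j\<in>A. (d j)\<^sup>2) * card A"
    by (rule sum_squared_le_sum_of_squares)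
  also have "(\<Sum>j\<in>A. (d j)\<^sup>2) = (\<Sum>j\<in>I. (d j)\<^sup>2) - (d i)\<^sup>2"
    using sum.remove[OF assms(1,2), of "\<lambda>j. (d j)\<^sup>2"] by (simp add: A_def)
  finally show ?thesis
    unfolding card_I by (simp add: algebra_simps)
qed

lemma batch_std_nonneg: "0 \<le> batch_std n E"
  unfolding batch_std_def by (simp add: sum_nonneg)

lemma samuelson_inequality:
  assumes "i \<in> {1..n}"
  shows "\<bar>E i - batch_mean n E\<bar> \<le> sqrt (real n - 1) * batch_std n E"
proof -
  define d where "d j = E j - batch_mean n E" for j
  define S where "S = (\<Sum>j=1..n. (d j)\<^sup>2)"
  have n_pos: "real n > 0"
    using assms by simp
  have "(\<Sum>j=1..n. d j) = 0"
    using n_pos by (simp add: d_def sum_subtractf batch_mean_def)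
  then have "real n * (d i)\<^sup>2 \<le> (real n - 1) * S"
    using centered_sq_le_sum_sq[of "{1..n}" i d] assms by (simp add: S_def)
  then have "(d i)\<^sup>2 \<le> (real n - 1) * (S / real n)"
    using n_pos by (simp add: field_simps)
  then have "\<bar>d i\<bar> \<le> sqrt ((real n - 1) * (S / real n))"
    by (intro real_le_rsqrt) simp
  also have "\<dots> = sqrt (real n - 1) * sqrt (S / real n)"
    by (rule real_sqrt_mult)
  also have "sqrt (S / real n) = batch_std n E"
    by (simp add: batch_std_def S_def d_def)
  finally show ?thesis
    by (simp add: d_def)
qed

lemma normalized_energy_abs_le:
  assumes "i \<in> {1..n}" and "eps > 0"
  shows "\<bar>normalized_energy n E eps i\<bar> \<le> sqrt (real n - 1)"
proof -
  define s where "s = batch_std n E"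
  have denom_pos: "s + eps > 0"
    using batch_std_nonneg[of n E] assms(2) by (simp add: s_def)
  have "\<bar>normalized_energy n E eps i\<bar> = \<bar>E i - batch_mean n E\<bar> / (s + eps)"
    using denom_pos by (simp add: normalized_energy_def s_def)
  also have "\<dots> \<le> sqrt (real n - 1) * s / (s + eps)"
    using samuelson_inequality[OF assms(1)] denom_pos
    by (simp add: s_def divide_right_mono)
  also have "\<dots> \<le> sqrt (real n - 1)"
    using assms denom_pos by (simp add: divide_le_eq mult_left_mono)
  finally show ?thesis .
qed

theorem proposition2:
  fixes n :: nat and E :: "nat \<Rightarrow> real" and eps \<beta> :: real
  assumes "n \<ge> 1" and "eps > 0" and "\<beta> > 0"
  shows "(n = 1 \<longrightarrow> trust_weight n E eps \<beta> 1 = 1 / 2)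
     \<and> (n \<ge> 2 \<longrightarrow> (\<forall>i\<in>{1..n}.
            sigmoid (- \<beta> * sqrt (real n - 1)) \<le> trust_weight n E eps \<beta> i
          \<and> trust_weight n E eps \<beta> i \<le> sigmoid (\<beta> * sqrt (real n - 1))))
     \<and> (\<forall>i\<in>{1..n}. 0 < trust_weight n E eps \<beta> i \<and> trust_weight n E eps \<beta> i < 1)"
proof -
  have scaled_bound: "\<bar>- \<beta> * normalized_energy n E eps i\<bar> \<le> \<beta> * sqrt (real n - 1)"
    if "i \<in> {1..n}" for i
    using normalized_energy_abs_le[OF that assms(2)] assms(3)
    by (simp add: abs_mult mult_left_mono)
  have "trust_weight n E eps \<beta> 1 = 1 / 2" if "n = 1"
    using scaled_bound[of 1] that assms(3) by (simp add: trust_weight_def sigmoid_0)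
  moreover have "sigmoid (- \<beta> * sqrt (real n - 1)) \<le> trust_weight n E eps \<beta> i
      \<and> trust_weight n E eps \<beta> i \<le> sigmoid (\<beta> * sqrt (real n - 1))" if "i \<in> {1..n}" for i
    using sigmoid_abs_le_bounds[OF scaled_bound[OF that]] by (simp add: trust_weight_def)
  moreover have "0 < trust_weight n E eps \<beta> i \<and> trust_weight n E eps \<beta> i < 1" for i
    by (simp add: trust_weight_def sigmoid_pos sigmoid_less_1)
  ultimately show ?thesis
    by blast
qed

end
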